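(* Every cohesive almost zero-dimensional subspace of $\mathfrak C\times\mathbb R$ is nowhere dense in $\mathfrak C\times\mathbb R$.
   Context: $\mathfrak C$ denotes the middle-third Cantor set in $[0,1]$. A subset $A$ of a space $X$ is a C-set in $X$ if $A$ is an intersection of clopen subsets of $X$. A space $X$ is almost zero-dimensional if every point of $X$ has a neighborhood basis consisting of C-sets in $X$. A space $X$ is cohesive if every point $x\in X$ has a neighborhood which contains no non-empty clopen subset of $X$. *)

theory Defs
  imports "HOL-Analysis.Analysis"
begin

fun cantor_stage :: "nat \<Rightarrow> real set" where
  "cantor_stage 0 = {0..1}"
| "cantor_stage (Suc n) = (\<lambda>x. x / 3) ` cantor_stage n \<union> (\<lambda>x. x / 3 + 2 / 3) ` cantor_stage n"

definition cantor_set :: "real set" where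
  "cantor_set = (\<Inter>n. cantor_stage n)"

definition C_set :: "'a topology \<Rightarrow> 'a set \<Rightarrow> bool" where
  "C_set X A \<longleftrightarrow> (\<exists>\<F>. (\<forall>U\<in>\<F>. openin X U \<and> closedin X U) \<and> A = topspace X \<inter> \<Inter>\<F>)"

definition is_nbhd :: "'a topology \<Rightarrow> 'a \<Rightarrow> 'a set \<Rightarrow> bool" where
  "is_nbhd X x N \<longleftrightarrow> N \<subseteq> topspace X \<and> (\<exists>W. openin X W \<and> x \<in> W \<and> W \<subseteq> N)"

definition almost_zero_dimensional :: "'a topology \<Rightarrow> bool" where
  "almost_zero_dimensional X \<longleftrightarrow>
     (\<forall>x\<in>topspace X. \<forall>N. is_nbhd X x N \<longrightarrow> (\<exists>V. C_set X V \<and> is_nbhd X x V \<and> V \<subseteq> N))"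

definition cohesive :: "'a topology \<Rightarrow> bool" where
  "cohesive X \<longleftrightarrow>
     (\<forall>x\<in>topspace X. \<exists>N. is_nbhd X x N \<and>
        \<not> (\<exists>A. A \<noteq> {} \<and> A \<subseteq> N \<and> openin X A \<and> closedin X A))"

end

theory Submission
  imports Defs
begin

text \<open>Suppose X is dense in an open piece of \<open>\<C> \<times> \<real>\<close> and pick \<open>x = (c0, t0) \<in> X\<close> there.
  Almost zero-dimensionality gives a C-set V of X around x inside a thin horizontal band; V is
  the trace on X of the closed set \<open>F = \<Inter>U\<in>\<F>. closure U\<close>. Points of X above and below the band
  yield horizontal segments at heights \<open>l < band < h\<close> missing F, over a column \<open>[u, v]\<close> whose
  ends lie in gaps of the Cantor set. By compactness one clopen \<open>U \<supseteq> V\<close> already misses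
  \<open>(\<C> \<inter> [u, v]) \<times> {l, h}\<close>. As the vertical sides of the box \<open>(u, v) \<times> (l, h)\<close> miss
  \<open>\<C> \<times> \<real>\<close>, U does not meet the boundary of the box, so the box cuts U to a nonempty clopen
  subset of X inside any prescribed neighbourhood of x, contradicting cohesion.\<close>

lemma compact_cantor_stage: "compact (cantor_stage n)"
  by (induction n)
    (auto intro!: compact_continuous_image continuous_on_add continuous_on_divide
      continuous_on_id continuous_on_const)

lemma closed_cantor_set: "closed cantor_set"
  unfolding cantor_set_def using compact_cantor_stage by (simp add: closed_INT compact_imp_closed)

lemma triadic_midpoint_notin_cantor_stage: "(real_of_int j + 1/2) / 3^n \<notin> cantor_stage (Suc n)"
proof (induction n arbitrary: j)
  case 0
  show ?case
  proof
    assume "(real_of_int j + 1/2) / 3^0 \<in> cantor_stage (Suc 0)"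
    then have "(0 \<le> real_of_int j + 1/2 \<and> real_of_int j + 1/2 \<le> 1/3) \<or>
               (2/3 \<le> real_of_int j + 1/2 \<and> real_of_int j + 1/2 \<le> 1)"
      by auto
    moreover have "j \<le> -1 \<or> j = 0 \<or> j \<ge> 1" by linarith
    ultimately show False by (auto simp del: of_int_le_iff)
  qed
next
  case (Suc n)
  show ?case
  proof
    assume "(real_of_int j + 1/2) / 3^Suc n \<in> cantor_stage (Suc (Suc n))"
    then obtain z where z: "z \<in> cantor_stage (Suc n)" and
      "(real_of_int j + 1/2) / 3^Suc n = z/3 \<or> (real_of_int j + 1/2) / 3^Suc n = z/3 + 2/3"
      by (simp only: cantor_stage.simps(2)[of "Suc n"] image_iff Un_iff) blast
    then consider "z = (real_of_int j + 1/2) / 3^n" | "z = (real_of_int (j - 2*3^n) + 1/2) / 3^n"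
      by (auto simp: field_simps)
    then show False using z Suc.IH by metis
  qed
qed

lemma cantor_set_complement_dense:
  fixes a b :: real
  assumes "a < b"
  obtains w where "a < w" "w < b" "w \<notin> cantor_set"
proof -
  obtain n where n: "(1/3::real)^n < (b - a)/2"
    using real_arch_pow_inv[of "(b - a)/2" "1/3"] assms by auto
  have pos: "(3::real)^n > 0" by simp
  define j where "j = \<lfloor>a * 3^n\<rfloor> + 1"
  have "real_of_int j > a * 3^n" "real_of_int j \<le> a * 3^n + 1" unfolding j_def by linarith+
  moreover have "1 < (b - a)/2 * 3^n" using n pos by (simp add: field_simps)
  ultimately have "a < (real_of_int j + 1/2) / 3^n" "(real_of_int j + 1/2) / 3^n < b"
    using pos by (simp_all add: field_simps)
  moreover have "(real_of_int j + 1/2) / 3^n \<notin> cantor_set"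
    using triadic_midpoint_notin_cantor_stage unfolding cantor_set_def by blast
  ultimately show ?thesis using that by blast
qed

lemma open_contains_box:
  fixes G :: "(real \<times> real) set"
  assumes "open G" "(a, b) \<in> G"
  obtains r where "r > 0" "{a - r<..<a + r} \<times> {b - r<..<b + r} \<subseteq> G"
proof -
  obtain e where e: "e > 0" "ball (a, b) e \<subseteq> G" using assms open_contains_ball by blast
  have "(c, t) \<in> ball (a, b) e" if "a - e/2 < c" "c < a + e/2" "b - e/2 < t" "t < b + e/2" for c t
    using that sqrt_sum_squares_le_sum_abs[of "a - c" "b - t"]
    by (simp add: dist_Pair_Pair dist_real_def abs_less_iff)
  then have "{a - e/2<..<a + e/2} \<times> {b - e/2<..<b + e/2} \<subseteq> ball (a, b) e"
    by auto
  then have "{a - e/2<..<a + e/2} \<times> {b - e/2<..<b + e/2} \<subseteq> G"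
    using e(2) by blast
  then show ?thesis using that e(1) by (meson half_gt_zero)
qed

lemma closure_point_box_meetsE:
  fixes X :: "('a::linorder_topology \<times> 'b::linorder_topology) set"
  assumes "(c, t) \<in> closure X" "a < c" "c < b" "\<alpha> < t" "t < \<beta>"
  obtains c' t' where "(c', t') \<in> X" "a < c'" "c' < b" "\<alpha> < t'" "t' < \<beta>"
proof -
  have "open ({a<..<b} \<times> {\<alpha><..<\<beta>})" by (simp add: open_Times)
  moreover have "(c, t) \<in> ({a<..<b} \<times> {\<alpha><..<\<beta>}) \<inter> closure X" using assms by auto
  ultimately have "({a<..<b} \<times> {\<alpha><..<\<beta>}) \<inter> X \<noteq> {}" using open_Int_closure_eq_empty by blast
  then show ?thesis using that by auto
qed

lemma horizontal_segment_avoiding_closed: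
  fixes F :: "(real \<times> real) set"
  assumes "closed F" "(c, h) \<notin> F" "u < c" "c < v"
  obtains u' v' where "u \<le> u'" "u' < c" "c < v'" "v' \<le> v"
    "u' \<notin> cantor_set" "v' \<notin> cantor_set" "({u'..v'} \<times> {h}) \<inter> F = {}"
proof -
  obtain d where d: "d > 0" "ball (c, h) d \<subseteq> - F"
    using assms(1,2) open_contains_ball[of "- F"] by (auto simp: closed_def)
  define d' where "d' = min d (min (c - u) (v - c))"
  have "d' > 0" "d' \<le> d" "d' \<le> c - u" "d' \<le> v - c" using d assms unfolding d'_def by auto
  then obtain u' where u': "c - d' < u'" "u' < c" "u' \<notin> cantor_set"
    using cantor_set_complement_dense[of "c - d'" c] by auto
  obtain v' where v': "c < v'" "v' < c + d'" "v' \<notin> cantor_set"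
    using cantor_set_complement_dense[of c "c + d'"] \<open>d' > 0\<close> by auto
  have "(c', h) \<in> ball (c, h) d" if "u' \<le> c'" "c' \<le> v'" for c'
    using that u' v' \<open>d' \<le> d\<close> by (simp add: dist_Pair_Pair dist_real_def abs_less_iff)
  then have "{u'..v'} \<times> {h} \<subseteq> ball (c, h) d" by auto
  then have "({u'..v'} \<times> {h}) \<inter> F = {}" using d(2) by blast
  moreover have "u \<le> u'" "v' \<le> v" using u' v' \<open>d' \<le> c - u\<close> \<open>d' \<le> v - c\<close> by auto
  ultimately show ?thesis using that u'(2,3) v'(1,3) by blast
qed

lemma C_set_closed_extension:
  fixes X :: "'a::topological_space set"
  assumes "C_set (top_of_set X) V"
  obtains F where "closed F" "X \<inter> F = V"
    "\<And>S. compact S \<Longrightarrow> S \<inter> F = {} \<Longrightarrow>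
       \<exists>U. openin (top_of_set X) U \<and> closedin (top_of_set X) U \<and> V \<subseteq> U \<and> U \<inter> S = {}"
proof -
  obtain \<F> where \<F>: "\<forall>U\<in>\<F>. openin (top_of_set X) U \<and> closedin (top_of_set X) U"
    and V: "V = X \<inter> \<Inter>\<F>"
    using assms unfolding C_set_def by auto
  define F where "F = (\<Inter>U\<in>\<F>. closure U)"
  have "closed F" unfolding F_def by (simp add: closed_INT)
  moreover have "X \<inter> closure U = U" if "U \<in> \<F>" for U
    using \<F> that closedin_Int_closure_of[of euclidean X U] by simp
  then have "X \<inter> F = V" unfolding F_def V by blast
  moreover have "\<exists>U. openin (top_of_set X) U \<and> closedin (top_of_set X) U \<and> V \<subseteq> U \<and> U \<inter> S = {}"
    if S: "compact S" "S \<inter> F = {}" for S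
  proof -
    have "S \<subseteq> (\<Union>U\<in>\<F>. - closure U)" using S(2) unfolding F_def by blast
    then obtain \<G> where \<G>: "\<G> \<subseteq> \<F>" "finite \<G>" "S \<subseteq> (\<Union>U\<in>\<G>. - closure U)"
      using compactE_image[OF S(1), of \<F> "\<lambda>U. - closure U"] by blast
    define U where "U = \<Inter>(insert X \<G>)"
    have clopen_members: "openin (top_of_set X) W \<and> closedin (top_of_set X) W" if "W \<in> insert X \<G>" for W
      using that \<F> \<G>(1) by auto
    have "openin (top_of_set X) U" unfolding U_def
      by (rule openin_Inter) (use \<G>(2) clopen_members in auto)
    moreover have "closedin (top_of_set X) U" unfolding U_def
      by (rule closedin_Inter) (use clopen_members in auto)
    moreover have "V \<subseteq> U" unfolding U_def V using \<G>(1) by blast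
    moreover have "U \<inter> S = {}" unfolding U_def using \<G>(3) closure_subset by blast
    ultimately show ?thesis by blast
  qed
  ultimately show ?thesis using that by blast
qed

lemma clopenin_Int_open_without_boundary:
  assumes "openin (top_of_set X) U" "closedin (top_of_set X) U"
    and "open B" "closed K" "B \<subseteq> K" "U \<inter> K \<subseteq> B"
  shows "openin (top_of_set X) (U \<inter> B)" "closedin (top_of_set X) (U \<inter> B)"
proof -
  show "openin (top_of_set X) (U \<inter> B)" using assms(1,3) by (rule openin_Int_open)
  have "U \<inter> B = U \<inter> (X \<inter> K)" using assms(1,5,6) openin_imp_subset by fastforce
  then show "closedin (top_of_set X) (U \<inter> B)"
    using assms(2,4) by (simp add: closedin_Int closedin_closed_Int)
qed

lemma clopenin_Int_box_with_cantor_gap_sides: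
  fixes X U :: "(real \<times> real) set"
  assumes X: "X \<subseteq> cantor_set \<times> UNIV"
    and U: "openin (top_of_set X) U" "closedin (top_of_set X) U"
    and "u \<notin> cantor_set" "v \<notin> cantor_set" "U \<inter> (cantor_set \<inter> {u..v}) \<times> {l, h} = {}"
  shows "openin (top_of_set X) (U \<inter> {u<..<v} \<times> {l<..<h})"
    "closedin (top_of_set X) (U \<inter> {u<..<v} \<times> {l<..<h})"
proof -
  have "(c, t) \<in> {u<..<v} \<times> {l<..<h}"
    if ct: "(c, t) \<in> U" "u \<le> c" "c \<le> v" "l \<le> t" "t \<le> h" for c t
  proof -
    have "c \<in> cantor_set" using ct(1) U(1) X openin_imp_subset by fastforce
    then have "c \<noteq> u" "c \<noteq> v" "t \<noteq> l" "t \<noteq> h" using assms(4-6) ct by auto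
    then show ?thesis using ct by auto
  qed
  then have "U \<inter> ({u..v} \<times> {l..h}) \<subseteq> {u<..<v} \<times> {l<..<h}" by auto
  moreover have "{u<..<v} \<times> {l<..<h} \<subseteq> {u..v} \<times> {l..h}" by (intro Sigma_mono) auto
  moreover have "open ({u<..<v} \<times> {l<..<h})" "closed ({u..v} \<times> {l..h})"
    by (simp_all add: open_Times closed_Times)
  ultimately show "openin (top_of_set X) (U \<inter> {u<..<v} \<times> {l<..<h})"
    "closedin (top_of_set X) (U \<inter> {u<..<v} \<times> {l<..<h})"
    using clopenin_Int_open_without_boundary[OF U] by blast+
qed

lemma segments_above_and_below_band:
  fixes X F :: "(real \<times> real) set"
  assumes X: "X \<subseteq> cantor_set \<times> UNIV" and c0: "c0 \<in> cantor_set" and s: "0 < s" "s \<le> r/2"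
    and dense: "(cantor_set \<inter> {c0 - r<..<c0 + r}) \<times> {t0 - r<..<t0 + r} \<subseteq> closure X"
    and F: "closed F" "X \<inter> F \<subseteq> UNIV \<times> {t0 - r/2<..<t0 + r/2}"
  obtains u v c l h where "c0 - s \<le> u" "u < c" "c < v" "v \<le> c0 + s" "c \<in> cantor_set"
    "u \<notin> cantor_set" "v \<notin> cantor_set" "t0 - r < l" "l < t0 - r/2" "t0 + r/2 < h" "h < t0 + r"
    "({u..v} \<times> {l, h}) \<inter> F = {}"
proof -
  have "(c0, t0 + 3*r/4) \<in> closure X" using dense c0 s by auto
  then obtain c1 h where c1h: "(c1, h) \<in> X" "c0 - s < c1" "c1 < c0 + s" "t0 + r/2 < h" "h < t0 + r"
    by (rule closure_point_box_meetsE) (use s in auto)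
  then have "(c1, h) \<notin> F" using F(2) by auto
  then obtain u1 v1 where uv1: "c0 - s \<le> u1" "u1 < c1" "c1 < v1" "v1 \<le> c0 + s"
    and top: "({u1..v1} \<times> {h}) \<inter> F = {}"
    by (rule horizontal_segment_avoiding_closed[OF F(1) _ c1h(2,3)]) (use c1h in auto)
  have "(c1, t0 - 3*r/4) \<in> closure X" using dense X c1h(1-3) s by auto
  then obtain c l where cl: "(c, l) \<in> X" "u1 < c" "c < v1" "t0 - r < l" "l < t0 - r/2"
    by (rule closure_point_box_meetsE) (use uv1 s in auto)
  then have "(c, l) \<notin> F" using F(2) by auto
  then obtain u v where uv: "u1 \<le> u" "u < c" "c < v" "v \<le> v1" "u \<notin> cantor_set" "v \<notin> cantor_set"
    and bottom: "({u..v} \<times> {l}) \<inter> F = {}"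
    by (rule horizontal_segment_avoiding_closed[OF F(1) _ cl(2,3)])
  have "{u..v} \<times> {h} \<subseteq> {u1..v1} \<times> {h}" using uv(1,4) by auto
  then have segments: "({u..v} \<times> {l, h}) \<inter> F = {}" using top bottom by blast
  have "c \<in> cantor_set" using cl(1) X by auto
  show ?thesis
    by (rule that) (use \<open>c \<in> cantor_set\<close> segments uv uv1 cl c1h in auto)
qed

lemma interior_of_closure_of_nonemptyE:
  fixes X Y :: "'a::topological_space set"
  assumes "X \<subseteq> Y" "top_of_set Y interior_of (top_of_set Y closure_of X) \<noteq> {}"
  obtains x G where "x \<in> X" "open G" "x \<in> G" "Y \<inter> G \<subseteq> closure X"
proof -
  have "top_of_set Y closure_of X = Y \<inter> closure X"
    using assms(1) by (simp add: closure_of_subtopology Int_absorb1)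
  then obtain T p where "openin (top_of_set Y) T" "p \<in> T" "T \<subseteq> Y \<inter> closure X"
    using assms(2) unfolding interior_of_def by auto
  then obtain G where G: "open G" "p \<in> G" "Y \<inter> G \<subseteq> closure X" "p \<in> closure X"
    by (auto simp: openin_open)
  then obtain x where "x \<in> X" "x \<in> G" using open_Int_closure_eq_empty by blast
  then show ?thesis using that G(1,3) by blast
qed

lemma clopen_in_box_around_dense_point:
  fixes X :: "(real \<times> real) set"
  assumes X: "X \<subseteq> cantor_set \<times> UNIV" and x0: "(c0, t0) \<in> X" and "r > 0"
    and dense: "(cantor_set \<inter> {c0 - r<..<c0 + r}) \<times> {t0 - r<..<t0 + r} \<subseteq> closure X"
    and V: "C_set (top_of_set X) V" "is_nbhd (top_of_set X) (c0, t0) V"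
      "V \<subseteq> UNIV \<times> {t0 - r/2<..<t0 + r/2}"
  obtains A where "A \<noteq> {}" "A \<subseteq> {c0 - r<..<c0 + r} \<times> {t0 - r<..<t0 + r}"
    "openin (top_of_set X) A" "closedin (top_of_set X) A"
proof -
  obtain G where G: "open G" "(c0, t0) \<in> G" "X \<inter> G \<subseteq> V"
    using V(2) unfolding is_nbhd_def by (auto simp: openin_open)
  obtain s0 where s0: "s0 > 0" "{c0 - s0<..<c0 + s0} \<times> {t0 - s0<..<t0 + s0} \<subseteq> G"
    using open_contains_box[OF G(1,2)] by blast
  define s where "s = min s0 (r/2)"
  have s: "s > 0" "s \<le> r/2" and "s \<le> s0" using s0 \<open>r > 0\<close> unfolding s_def by auto
  obtain F where F: "closed F" "X \<inter> F = V"
    and separate: "\<And>S. compact S \<Longrightarrow> S \<inter> F = {} \<Longrightarrow>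
      \<exists>U. openin (top_of_set X) U \<and> closedin (top_of_set X) U \<and> V \<subseteq> U \<and> U \<inter> S = {}"
    using C_set_closed_extension[OF V(1)] by blast
  have c0: "c0 \<in> cantor_set" using x0 X by auto
  obtain u v c l h where uv: "c0 - s \<le> u" "u < c" "c < v" "v \<le> c0 + s" "c \<in> cantor_set"
    "u \<notin> cantor_set" "v \<notin> cantor_set" and lh: "t0 - r < l" "l < t0 - r/2" "t0 + r/2 < h" "h < t0 + r"
    and segments: "({u..v} \<times> {l, h}) \<inter> F = {}"
  proof -
    have "X \<inter> F \<subseteq> UNIV \<times> {t0 - r/2<..<t0 + r/2}" using F(2) V(3) by simp
    from segments_above_and_below_band[OF X c0 s dense F(1) this that] show ?thesis .
  qed
  define S where "S = (cantor_set \<inter> {u..v}) \<times> {l, h}"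
  have "S \<subseteq> {u..v} \<times> {l, h}" unfolding S_def by auto
  then have "S \<inter> F = {}" using segments by blast
  moreover have "compact S" unfolding S_def
    by (intro compact_Times closed_Int_compact closed_cantor_set) auto
  ultimately obtain U where U: "openin (top_of_set X) U" "closedin (top_of_set X) U"
    "V \<subseteq> U" "U \<inter> S = {}"
    using separate by blast
  define A where "A = U \<inter> {u<..<v} \<times> {l<..<h}"
  have "openin (top_of_set X) A" "closedin (top_of_set X) A"
    unfolding A_def using clopenin_Int_box_with_cantor_gap_sides[OF X U(1,2) uv(6,7)] U(4)
    unfolding S_def by simp_all
  moreover have "A \<noteq> {}"
  proof -
    have "(c, t0) \<in> closure X" using dense uv s by auto
    then obtain c' t where ct: "(c', t) \<in> X" "u < c'" "c' < v" "t0 - s < t" "t < t0 + s"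
      by (rule closure_point_box_meetsE) (use uv s in auto)
    then have "(c', t) \<in> {c0 - s0<..<c0 + s0} \<times> {t0 - s0<..<t0 + s0}"
      using uv \<open>s \<le> s0\<close> by auto
    then have "(c', t) \<in> X \<inter> G" using ct(1) s0(2) by blast
    then have "(c', t) \<in> A" using ct G(3) U(3) lh s unfolding A_def by auto
    then show ?thesis by blast
  qed
  moreover have "A \<subseteq> {c0 - r<..<c0 + r} \<times> {t0 - r<..<t0 + r}"
    unfolding A_def using uv lh s by auto
  ultimately show ?thesis using that by blast
qed

lemma clopen_in_nbhd_of_dense_point:
  fixes X :: "(real \<times> real) set"
  assumes X: "X \<subseteq> cantor_set \<times> UNIV" and azd: "almost_zero_dimensional (top_of_set X)"
    and x0: "(c0, t0) \<in> X" and G: "open G" "(c0, t0) \<in> G"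
    and dense_in_G: "(cantor_set \<times> UNIV) \<inter> G \<subseteq> closure X"
    and N: "is_nbhd (top_of_set X) (c0, t0) N"
  obtains A where "A \<noteq> {}" "A \<subseteq> N" "openin (top_of_set X) A" "closedin (top_of_set X) A"
proof -
  obtain W where W: "open W" "(c0, t0) \<in> W" "X \<inter> W \<subseteq> N"
    using N unfolding is_nbhd_def by (auto simp: openin_open)
  have "open (G \<inter> W)" "(c0, t0) \<in> G \<inter> W" using G W by auto
  then obtain r where r: "r > 0" "{c0 - r<..<c0 + r} \<times> {t0 - r<..<t0 + r} \<subseteq> G \<inter> W"
    by (rule open_contains_box)
  define N' where "N' = X \<inter> {c0 - r<..<c0 + r} \<times> {t0 - r/2<..<t0 + r/2}"
  have "openin (top_of_set X) N'" unfolding N'_def by (intro openin_open_Int) (simp add: open_Times)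
  moreover have "(c0, t0) \<in> N'" using x0 r(1) unfolding N'_def by auto
  moreover have "N' \<subseteq> X" unfolding N'_def by blast
  ultimately have "is_nbhd (top_of_set X) (c0, t0) N'" unfolding is_nbhd_def by auto
  then obtain V where V: "C_set (top_of_set X) V" "is_nbhd (top_of_set X) (c0, t0) V" "V \<subseteq> N'"
    using azd x0 unfolding almost_zero_dimensional_def topspace_euclidean_subtopology by blast
  have "(cantor_set \<inter> {c0 - r<..<c0 + r}) \<times> {t0 - r<..<t0 + r} \<subseteq> (cantor_set \<times> UNIV) \<inter> G"
    using r(2) by auto
  then have "(cantor_set \<inter> {c0 - r<..<c0 + r}) \<times> {t0 - r<..<t0 + r} \<subseteq> closure X"
    using dense_in_G by (rule order_trans)
  moreover have "V \<subseteq> UNIV \<times> {t0 - r/2<..<t0 + r/2}" using V(3) unfolding N'_def by blast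
  ultimately obtain A where A: "A \<noteq> {}" "A \<subseteq> {c0 - r<..<c0 + r} \<times> {t0 - r<..<t0 + r}"
    "openin (top_of_set X) A" "closedin (top_of_set X) A"
    by (rule clopen_in_box_around_dense_point[OF X x0 r(1) _ V(1,2)])
  have "A \<subseteq> X \<inter> W" using A(2) r(2) openin_imp_subset[OF A(3)] by auto
  then have "A \<subseteq> N" using W(3) by (rule order_trans)
  then show ?thesis using that A(1,3,4) by blast
qed

theorem theorem3p3:
  fixes X :: "(real \<times> real) set"
  assumes "X \<subseteq> cantor_set \<times> (UNIV :: real set)"
    and "cohesive (subtopology euclidean X)"
    and "almost_zero_dimensional (subtopology euclidean X)"
  shows "(top_of_set (cantor_set \<times> (UNIV :: real set))) interior_of
           ((top_of_set (cantor_set \<times> (UNIV :: real set))) closure_of X) = {}"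
proof (rule ccontr)
  assume "\<not> ?thesis"
  then obtain x G where "x \<in> X" "open G" "x \<in> G"
    and dense_in_G: "(cantor_set \<times> UNIV) \<inter> G \<subseteq> closure X"
    by (rule interior_of_closure_of_nonemptyE[OF assms(1)])
  moreover obtain c0 t0 where "x = (c0, t0)" by fastforce
  ultimately have x0: "(c0, t0) \<in> X" and G: "open G" "(c0, t0) \<in> G" by auto
  obtain N where N: "is_nbhd (top_of_set X) (c0, t0) N"
    and no_clopen: "\<not> (\<exists>A. A \<noteq> {} \<and> A \<subseteq> N \<and> openin (top_of_set X) A \<and> closedin (top_of_set X) A)"
    using assms(2) x0 unfolding cohesive_def by (metis topspace_euclidean_subtopology)
  obtain A where "A \<noteq> {}" "A \<subseteq> N" "openin (top_of_set X) A" "closedin (top_of_set X) A"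
    by (rule clopen_in_nbhd_of_dense_point[OF assms(1,3) x0 G dense_in_G N])
  then show False using no_clopen by blast
qed

end
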